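(* Let $k$ be a positive integer and let $G$ be a finite, simple, undirected, connected graph of order $n\ge 2$. (a) If $O_{R,k}(G)=\mathcal{M}$, then $\dim_k(G)\le\lfloor n/2\rfloor$. (b) If $\dim_k(G)\ge\lceil n/2\rceil+1$, then $O_{R,k}(G)=\mathcal{B}$.
   Context: $d(x,y)$ is the shortest-path distance and $d_k(x,y)=\min\{d(x,y),k+1\}$. A set $S\subseteq V(G)$ is a distance-$k$ resolving set if for all distinct $x,y\in V(G)$ some $z\in S$ has $d_k(x,z)\ne d_k(y,z)$; $\dim_k(G)$ is the minimum cardinality of a distance-$k$ resolving set. In the Maker-Breaker distance-$k$ resolving game on $G$, Maker and Breaker alternately select a not-yet-chosen vertex; Maker wins if his selected vertices form a distance-$k$ resolving set, Breaker wins otherwise. $O_{R,k}(G)=\mathcal{M}$ if Maker has a winning strategy whether he moves first or second, $\mathcal{B}$ if Breaker has a winning strategy whether she moves first or second, and $\mathcal{N}$ if the first player has a winning strategy. *)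

theory Defs
  imports Main
begin

definition simple_graph :: "'a set \<Rightarrow> ('a \<Rightarrow> 'a \<Rightarrow> bool) \<Rightarrow> bool" where
  "simple_graph V E \<longleftrightarrow> finite V \<and> (\<forall>x y. E x y \<longrightarrow> x \<in> V \<and> y \<in> V)
     \<and> (\<forall>x y. E x y \<longrightarrow> E y x) \<and> (\<forall>x. \<not> E x x)"

fun is_walk :: "('a \<Rightarrow> 'a \<Rightarrow> bool) \<Rightarrow> 'a list \<Rightarrow> bool" where
  "is_walk E [] = False"
| "is_walk E [x] = True"
| "is_walk E (x # y # xs) = (E x y \<and> is_walk E (y # xs))"

definition walk_betw :: "'a set \<Rightarrow> ('a \<Rightarrow> 'a \<Rightarrow> bool) \<Rightarrow> 'a \<Rightarrow> 'a list \<Rightarrow> 'a \<Rightarrow> bool" where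
  "walk_betw V E x p y \<longleftrightarrow> is_walk E p \<and> set p \<subseteq> V \<and> hd p = x \<and> last p = y"

definition connected_graph :: "'a set \<Rightarrow> ('a \<Rightarrow> 'a \<Rightarrow> bool) \<Rightarrow> bool" where
  "connected_graph V E \<longleftrightarrow> (\<forall>x\<in>V. \<forall>y\<in>V. \<exists>p. walk_betw V E x p y)"

definition gdist :: "'a set \<Rightarrow> ('a \<Rightarrow> 'a \<Rightarrow> bool) \<Rightarrow> 'a \<Rightarrow> 'a \<Rightarrow> nat" where
  "gdist V E x y = (LEAST n. \<exists>p. walk_betw V E x p y \<and> length p = Suc n)"

definition dist_k :: "'a set \<Rightarrow> ('a \<Rightarrow> 'a \<Rightarrow> bool) \<Rightarrow> nat \<Rightarrow> 'a \<Rightarrow> 'a \<Rightarrow> nat" where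
  "dist_k V E k x y = min (gdist V E x y) (k + 1)"

definition dk_resolving :: "'a set \<Rightarrow> ('a \<Rightarrow> 'a \<Rightarrow> bool) \<Rightarrow> nat \<Rightarrow> 'a set \<Rightarrow> bool" where
  "dk_resolving V E k S \<longleftrightarrow> S \<subseteq> V \<and>
     (\<forall>x\<in>V. \<forall>y\<in>V. x \<noteq> y \<longrightarrow> (\<exists>z\<in>S. dist_k V E k x z \<noteq> dist_k V E k y z))"

definition dim_k :: "'a set \<Rightarrow> ('a \<Rightarrow> 'a \<Rightarrow> bool) \<Rightarrow> nat \<Rightarrow> nat" where
  "dim_k V E k = (LEAST n. \<exists>S. dk_resolving V E k S \<and> card S = n)"

text \<open>A position is (M, B): the sets of
  vertices chosen so far by Maker and Breaker; the boolean says whether Maker is to move.\<close>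

inductive maker_can_win :: "'a set \<Rightarrow> ('a \<Rightarrow> 'a \<Rightarrow> bool) \<Rightarrow> nat \<Rightarrow> bool \<Rightarrow> 'a set \<Rightarrow> 'a set \<Rightarrow> bool"
  for V E k where
  mw_end: "V - (M \<union> B) = {} \<Longrightarrow> dk_resolving V E k M \<Longrightarrow> maker_can_win V E k t M B"
| mw_maker: "v \<in> V - (M \<union> B) \<Longrightarrow> maker_can_win V E k False (insert v M) B
     \<Longrightarrow> maker_can_win V E k True M B"
| mw_breaker: "V - (M \<union> B) \<noteq> {} \<Longrightarrow> (\<forall>v \<in> V - (M \<union> B). maker_can_win V E k True M (insert v B))
     \<Longrightarrow> maker_can_win V E k False M B"

inductive breaker_can_win :: "'a set \<Rightarrow> ('a \<Rightarrow> 'a \<Rightarrow> bool) \<Rightarrow> nat \<Rightarrow> bool \<Rightarrow> 'a set \<Rightarrow> 'a set \<Rightarrow> bool"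
  for V E k where
  bw_end: "V - (M \<union> B) = {} \<Longrightarrow> \<not> dk_resolving V E k M \<Longrightarrow> breaker_can_win V E k t M B"
| bw_breaker: "v \<in> V - (M \<union> B) \<Longrightarrow> breaker_can_win V E k True M (insert v B)
     \<Longrightarrow> breaker_can_win V E k False M B"
| bw_maker: "V - (M \<union> B) \<noteq> {} \<Longrightarrow> (\<forall>v \<in> V - (M \<union> B). breaker_can_win V E k False (insert v M) B)
     \<Longrightarrow> breaker_can_win V E k True M B"

text \<open>Outcome \<M>: Maker wins whether he moves first or second.
  Outcome \<B>: Breaker wins whether she moves first or second.\<close>
definition outcome_M :: "'a set \<Rightarrow> ('a \<Rightarrow> 'a \<Rightarrow> bool) \<Rightarrow> nat \<Rightarrow> bool" where
  "outcome_M V E k \<longleftrightarrow> maker_can_win V E k True {} {} \<and> maker_can_win V E k False {} {}"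

definition outcome_B :: "'a set \<Rightarrow> ('a \<Rightarrow> 'a \<Rightarrow> bool) \<Rightarrow> nat \<Rightarrow> bool" where
  "outcome_B V E k \<longleftrightarrow> breaker_can_win V E k False {} {} \<and> breaker_can_win V E k True {} {}"

end

theory Submission
  imports Defs
begin

text \<open>Only counting is involved. With \<open>r\<close> vertices still free and players alternating
  until the board is full, Maker claims \<open>\<lceil>r/2\<rceil>\<close> of them if he is to move and \<open>\<lfloor>r/2\<rfloor>\<close>
  otherwise. Hence a winning Maker who moves second ends with a resolving set of at most
  \<open>\<lfloor>n/2\<rfloor>\<close> vertices, and if \<open>dim\<^sub>k(G) > \<lceil>n/2\<rceil>\<close> Maker can never own a resolving set, so
  Breaker wins by playing arbitrarily.\<close>

definition maker_share :: "bool \<Rightarrow> nat \<Rightarrow> nat" where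
  "maker_share t r = (if t then (r + 1) div 2 else r div 2)"

lemma maker_share_0 [simp]: "maker_share t 0 = 0"
  by (simp add: maker_share_def)

lemma maker_share_Suc_True [simp]: "maker_share True (Suc r) = Suc (maker_share False r)"
  by (simp add: maker_share_def)

lemma maker_share_Suc_False [simp]: "maker_share False (Suc r) = maker_share True r"
  by (simp add: maker_share_def)

lemma card_insert_le_Suc: "card (insert v M) \<le> Suc (card M)"
  by (cases "finite M") (auto simp: card_insert_if)

lemma card_free_insert:
  assumes "finite V" "v \<in> V - (M \<union> B)"
  shows card_free_insert_Maker: "Suc (card (V - (insert v M \<union> B))) = card (V - (M \<union> B))"
    and card_free_insert_Breaker: "Suc (card (V - (M \<union> insert v B))) = card (V - (M \<union> B))"
proof -
  have "V - (insert v M \<union> B) = (V - (M \<union> B)) - {v}" "V - (M \<union> insert v B) = (V - (M \<union> B)) - {v}"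
    by auto
  moreover have "Suc (card ((V - (M \<union> B)) - {v})) = card (V - (M \<union> B))"
    using assms by (metis card_Suc_Diff1 finite_Diff)
  ultimately show "Suc (card (V - (insert v M \<union> B))) = card (V - (M \<union> B))"
    and "Suc (card (V - (M \<union> insert v B))) = card (V - (M \<union> B))"
    by simp_all
qed

lemma dim_k_le_card: "dk_resolving V E k S \<Longrightarrow> dim_k V E k \<le> card S"
  unfolding dim_k_def by (rule Least_le) blast

lemma maker_can_win_obtains_small_resolving:
  assumes "maker_can_win V E k t M B" "finite V"
  shows "\<exists>S. dk_resolving V E k S \<and> card S \<le> card M + maker_share t (card (V - (M \<union> B)))"
  using assms
proof (induction rule: maker_can_win.induct)
  case (mw_end M B t)
  then show ?case by auto
next
  case (mw_maker v M B)
  then obtain S where S: "dk_resolving V E k S"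
    and "card S \<le> card (insert v M) + maker_share False (card (V - (insert v M \<union> B)))"
    by blast
  then have "card S \<le> card M + maker_share True (Suc (card (V - (insert v M \<union> B))))"
    using card_insert_le_Suc[of v M] by simp
  then show ?case
    using S card_free_insert_Maker[OF mw_maker.prems mw_maker.hyps(1)] by metis
next
  case (mw_breaker M B)
  then obtain v where v: "v \<in> V - (M \<union> B)" by blast
  with mw_breaker obtain S where S: "dk_resolving V E k S"
    and "card S \<le> card M + maker_share True (card (V - (M \<union> insert v B)))"
    by blast
  then show ?case
    using card_free_insert_Breaker[OF mw_breaker.prems v] by (metis maker_share_Suc_False)
qed

lemma breaker_can_win_if_dim_k_large:
  assumes "finite V" "card M + maker_share t (card (V - (M \<union> B))) < dim_k V E k"
  shows "breaker_can_win V E k t M B"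
  using assms(2)
proof (induction "card (V - (M \<union> B))" arbitrary: t M B)
  case 0
  then have "V - (M \<union> B) = {}" using assms(1) by simp
  moreover have "\<not> dk_resolving V E k M" using 0 dim_k_le_card by fastforce
  ultimately show ?case by (rule bw_end)
next
  case (Suc r)
  then have free: "V - (M \<union> B) \<noteq> {}" by (metis card.empty nat.distinct(1))
  show ?case
  proof (cases t)
    case True
    have "breaker_can_win V E k False (insert v M) B" if v: "v \<in> V - (M \<union> B)" for v
    proof -
      have r: "r = card (V - (insert v M \<union> B))"
        using card_free_insert_Maker[OF assms(1) v] Suc.hyps(2) by simp
      have "card (insert v M) + maker_share False r < dim_k V E k"
        using Suc.prems True card_insert_le_Suc[of v M] by (simp add: Suc.hyps(2)[symmetric])
      with r show ?thesis using Suc.hyps(1) by blast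
    qed
    then show ?thesis using True free by (simp add: bw_maker)
  next
    case False
    from free obtain v where v: "v \<in> V - (M \<union> B)" by blast
    have r: "r = card (V - (M \<union> insert v B))"
      using card_free_insert_Breaker[OF assms(1) v] Suc.hyps(2) by simp
    have "card M + maker_share True r < dim_k V E k"
      using Suc.prems False by (simp add: Suc.hyps(2)[symmetric])
    with r have "breaker_can_win V E k True M (insert v B)" using Suc.hyps(1) by blast
    then show ?thesis using False v by (simp add: bw_breaker)
  qed
qed

theorem mainTheorem5:
  fixes V :: "'a set" and E :: "'a \<Rightarrow> 'a \<Rightarrow> bool" and k :: nat
  assumes "k \<ge> 1" and "simple_graph V E" and "connected_graph V E" and "card V \<ge> 2"
  shows "(outcome_M V E k \<longrightarrow> dim_k V E k \<le> card V div 2)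
       \<and> (dim_k V E k \<ge> (card V + 1) div 2 + 1 \<longrightarrow> outcome_B V E k)"
proof (intro conjI impI)
  have fin: "finite V" using assms(2) unfolding simple_graph_def by blast
  show "dim_k V E k \<le> card V div 2" if "outcome_M V E k"
  proof -
    from that have "maker_can_win V E k False {} {}" unfolding outcome_M_def by blast
    then obtain S where "dk_resolving V E k S" "card S \<le> card V div 2"
      using maker_can_win_obtains_small_resolving[OF _ fin] by (fastforce simp: maker_share_def)
    then show ?thesis using dim_k_le_card by fastforce
  qed
  show "outcome_B V E k" if "dim_k V E k \<ge> (card V + 1) div 2 + 1"
    using that breaker_can_win_if_dim_k_large[OF fin, of "{}" _ "{}"]
    unfolding outcome_B_def maker_share_def by simp
qed

end
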